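(* Let $\mathcal X$ be a separable metric space with at least two points, $\Omega=\mathcal X^{\mathbb N}$ with the product topology, and $\Sigma$ a $\sigma$-algebra on $\Omega$ containing all open sets. For every finitely additive probability $P$ on $(\Omega,\Sigma)$ there exists a strongly nonatomic finitely additive probability $\widetilde P$ on $(\Omega,\Sigma)$ such that $P(U)\le\widetilde P(U)$ for every open set $U\subseteq\Omega$.
   Context: A finitely additive probability $P$ on $(\Omega,\Sigma)$ is strongly nonatomic if for every $E\in\Sigma$ and $\alpha\in[0,1]$ there is $F\in\Sigma$ with $F\subseteq E$ and $P(F)=\alpha P(E)$. *)

theory Defs
  imports "HOL-Analysis.Analysis"
begin

definition fa_probability :: "'w set set \<Rightarrow> ('w set \<Rightarrow> real) \<Rightarrow> bool" where
  "fa_probability S P \<longleftrightarrow>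
     (\<forall>A\<in>S. 0 \<le> P A) \<and> P UNIV = 1 \<and>
     (\<forall>A\<in>S. \<forall>B\<in>S. A \<inter> B = {} \<longrightarrow> P (A \<union> B) = P A + P B)"

definition strongly_nonatomic :: "'w set set \<Rightarrow> ('w set \<Rightarrow> real) \<Rightarrow> bool" where
  "strongly_nonatomic S P \<longleftrightarrow>
     (\<forall>E\<in>S. \<forall>\<alpha>::real. 0 \<le> \<alpha> \<and> \<alpha> \<le> 1 \<longrightarrow> (\<exists>F\<in>S. F \<subseteq> E \<and> P F = \<alpha> * P E))"

end

theory Submission
  imports Defs
begin

text \<open>
  The required \<open>Q\<close> is a mixture \<open>Q A = \<integral> \<kappa> A \<omega> dP(\<omega>)\<close> of finitely additive
  probabilities \<open>\<kappa> _ \<omega>\<close>, one for each point \<open>\<omega>\<close>. Fix a countable dense \<open>D\<close> and points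
  \<open>x \<noteq> y\<close>. The grid point \<open>h \<omega> n k\<close> follows \<open>D\<close>-approximations of \<open>\<omega>\<close> on the first \<open>n\<close>
  coordinates and is \<open>x\<close> afterwards, except for a single \<open>y\<close> at a position encoding \<open>(n, k)\<close>;
  \<open>\<kappa> A \<omega>\<close> is an ultralimit over \<open>n\<close> of the proportion of \<open>k < n\<close> with \<open>h \<omega> n k \<in> A\<close>.
  For large \<open>n\<close> every open neighbourhood of \<open>\<omega>\<close> contains the whole \<open>n\<close>-th row, so
  \<open>\<kappa> U \<omega> = 1\<close> for open \<open>U \<ni> \<omega>\<close>. Since a grid point determines its row, keeping in each row
  the first \<open>\<lfloor>\<alpha> c\<rfloor>\<close> of the \<open>c\<close> points lying in \<open>E\<close> gives a countable, hence measurable,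
  \<open>F \<subseteq> E\<close> with \<open>\<kappa> F = \<alpha> \<kappa> E\<close> at every point. The integral against the finitely additive
  \<open>P\<close> is an ultralimit of Riemann sums over tagged finite partitions; it is positive and linear,
  so \<open>Q\<close> inherits these properties and dominates \<open>P\<close> on open sets.
\<close>

section \<open>Ultrafilters\<close>

definition ultrafilter :: "'i filter \<Rightarrow> bool" where
  "ultrafilter U \<longleftrightarrow> U \<noteq> bot \<and> (\<forall>P. eventually P U \<or> eventually (\<lambda>x. \<not> P x) U)"

lemma Inf_chain_ne_bot:
  fixes C :: "'i filter set"
  assumes "C \<noteq> {}" and chain: "\<And>U V. U \<in> C \<Longrightarrow> V \<in> C \<Longrightarrow> U \<le> V \<or> V \<le> U" and "bot \<notin> C"
  shows "Inf C \<noteq> bot"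
proof -
  have "eventually P (Inf C) \<longleftrightarrow> (\<exists>U\<in>C. eventually P U)" for P
  proof (rule eventually_Inf_base[OF \<open>C \<noteq> {}\<close>])
    fix U V assume "U \<in> C" "V \<in> C"
    then show "\<exists>W\<in>C. W \<le> inf U V" using chain[of U V] by (metis inf.absorb1 inf.absorb2 order_refl)
  qed
  from this[of "\<lambda>_. False"] show ?thesis using \<open>bot \<notin> C\<close> by (auto simp: eventually_False)
qed

lemma ultrafilter_exists:
  fixes F :: "'i filter"
  assumes "F \<noteq> bot"
  obtains U where "U \<le> F" "ultrafilter U"
proof -
  define A where "A = {U. U \<le> F \<and> U \<noteq> bot}"
  have po: "partial_order_on A (relation_of (\<lambda>U V. V \<le> U) A)"
    by (rule partial_order_on_relation_ofI) auto
  have "\<exists>u\<in>A. \<forall>a\<in>C. u \<le> a" if C: "C \<in> Chains (relation_of (\<lambda>U V. V \<le> U) A)" for C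
  proof (cases "C = {}")
    case True
    then show ?thesis using assms by (auto simp: A_def)
  next
    case False
    have CA: "C \<subseteq> A" using Chains_relation_of[OF C] .
    have "U \<le> V \<or> V \<le> U" if "U \<in> C" "V \<in> C" for U V
      using C that unfolding Chains_def relation_of_def by auto
    then have "Inf C \<noteq> bot"
      using False CA by (intro Inf_chain_ne_bot) (auto simp: A_def)
    moreover obtain U0 where "U0 \<in> C" using False by blast
    then have "Inf C \<le> F" using CA by (auto simp: A_def intro: Inf_lower2)
    ultimately show ?thesis by (auto simp: A_def intro: Inf_lower)
  qed
  then obtain U where U: "U \<in> A" and max: "\<And>V. V \<in> A \<Longrightarrow> V \<le> U \<Longrightarrow> V = U"
    using predicate_Zorn[OF po] by blast
  have "eventually P U \<or> eventually (\<lambda>x. \<not> P x) U" for P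
  proof (rule ccontr)
    assume neither: "\<not> ?thesis"
    define V where "V = inf U (principal {x. P x})"
    have "V \<noteq> bot"
      using neither by (auto simp: V_def trivial_limit_def eventually_inf_principal)
    moreover have "V \<le> U" "V \<le> F"
      using U by (auto simp: A_def V_def intro: le_infI1)
    ultimately have "V = U" using max by (simp add: A_def)
    moreover have "eventually P V" by (simp add: V_def eventually_inf_principal)
    ultimately have "eventually P U" by simp
    then show False using neither by simp
  qed
  then show ?thesis using that U by (auto simp: A_def ultrafilter_def)
qed

lemma ultrafilter_convergent:
  fixes f :: "'i \<Rightarrow> 'a::topological_space"
  assumes U: "ultrafilter U" and K: "compact K" and f: "eventually (\<lambda>i. f i \<in> K) U"
  shows "\<exists>l. (f \<longlongrightarrow> l) U"
proof -
  have "filtermap f U \<noteq> bot" using U by (simp add: ultrafilter_def filtermap_bot_iff)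
  then obtain l where l: "inf (nhds l) (filtermap f U) \<noteq> bot"
    using K f unfolding compact_filter by (auto simp: eventually_filtermap)
  have "(f \<longlongrightarrow> l) U"
  proof (rule topological_tendstoI)
    fix S assume S: "open S" "l \<in> S"
    show "eventually (\<lambda>i. f i \<in> S) U"
    proof (rule ccontr)
      assume "\<not> ?thesis"
      then have "eventually (\<lambda>y. y \<notin> S) (filtermap f U)"
        using U by (auto simp: ultrafilter_def eventually_filtermap)
      moreover have "eventually (\<lambda>y. y \<in> S) (nhds l)" using S by (rule eventually_nhds_in_open)
      ultimately have "eventually (\<lambda>_. False) (inf (nhds l) (filtermap f U))"
        unfolding eventually_inf by blast
      then show False using l by (simp add: trivial_limit_def)
    qed
  qed
  then show ?thesis ..
qed

lemma tendsto_Lim_ultrafilter: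
  fixes f :: "'i \<Rightarrow> real"
  assumes U: "ultrafilter U" and bounded: "eventually (\<lambda>i. \<bar>f i\<bar> \<le> B) U"
  shows "(f \<longlongrightarrow> Lim U f) U"
proof -
  have "eventually (\<lambda>i. f i \<in> {-B..B}) U"
    using bounded by (rule eventually_mono) (auto simp: abs_le_iff)
  then obtain l where l: "(f \<longlongrightarrow> l) U"
    using ultrafilter_convergent[OF U compact_Icc] by blast
  moreover have "U \<noteq> bot" using U by (simp add: ultrafilter_def)
  ultimately show ?thesis by (simp add: tendsto_Lim)
qed

section \<open>Integration against a finitely additive probability\<close>

lemma fa_probability_empty:
  assumes "algebra UNIV S" and "fa_probability S P"
  shows "P {} = 0"
proof -
  interpret algebra UNIV S by (rule assms(1))
  have "{} \<in> S" by simp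
  then have "P ({} \<union> {}) = P {} + P {}" using assms(2) unfolding fa_probability_def by blast
  then show ?thesis by simp
qed

lemma fa_probability_Union:
  assumes S: "algebra UNIV S" and P: "fa_probability S P"
    and X: "finite X" "X \<subseteq> S" "disjoint X"
  shows "P (\<Union>X) = (\<Sum>C\<in>X. P C)"
  using X
proof (induction X rule: finite_induct)
  case empty
  then show ?case using fa_probability_empty[OF S P] by simp
next
  case (insert C X)
  interpret algebra UNIV S by (rule S)
  have "\<Union>X \<in> S" using insert.prems by (intro finite_Union insert.hyps) auto
  moreover have "C \<inter> \<Union>X = {}"
    using insert.prems(2) insert.hyps(2) by (auto simp: pairwise_def disjnt_def)
  ultimately have "P (C \<union> \<Union>X) = P C + P (\<Union>X)"
    using P insert.prems(1) by (simp add: fa_probability_def)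
  moreover have "disjoint X" using insert.prems(2) by (auto simp: pairwise_def)
  ultimately show ?case using insert by simp
qed

definition finite_partitions :: "'w set set \<Rightarrow> 'w set set set" where
  "finite_partitions S = {\<pi>. partition_on UNIV \<pi> \<and> finite \<pi> \<and> \<pi> \<subseteq> S}"

definition tagged_partition :: "'w set set \<Rightarrow> 'w set set \<Rightarrow> ('w set \<Rightarrow> 'w) \<Rightarrow> bool" where
  "tagged_partition S \<pi> c \<longleftrightarrow> \<pi> \<in> finite_partitions S \<and> (\<forall>C\<in>\<pi>. c C \<in> C)"

definition refinement_filter :: "'w set set \<Rightarrow> ('w set set \<times> ('w set \<Rightarrow> 'w)) filter" where
  "refinement_filter S =
     (INF \<pi>'\<in>finite_partitions S. principal {(\<pi>, c). tagged_partition S \<pi> c \<and> refines UNIV \<pi> \<pi>'})"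

definition riemann_sum :: "('w set \<Rightarrow> real) \<Rightarrow> ('w \<Rightarrow> real) \<Rightarrow> 'w set set \<times> ('w set \<Rightarrow> 'w) \<Rightarrow> real" where
  "riemann_sum P g = (\<lambda>(\<pi>, c). \<Sum>C\<in>\<pi>. P C * g (c C))"

lemma common_refinement_pairE:
  assumes "X \<in> common_refinement {\<pi>1, \<pi>2}"
  obtains A B where "A \<in> \<pi>1" "B \<in> \<pi>2" "X = A \<inter> B"
proof -
  obtain f where "f \<in> (\<Pi> P\<in>{\<pi>1, \<pi>2}. P)" "X = \<Inter> (f ` {\<pi>1, \<pi>2})"
    using assms unfolding common_refinement by blast
  then show ?thesis using that[of "f \<pi>1" "f \<pi>2"] by auto
qed

lemma finite_partitions_common_refinement:
  assumes S: "algebra UNIV S" and "\<pi>1 \<in> finite_partitions S" and "\<pi>2 \<in> finite_partitions S"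
  shows "common_refinement {\<pi>1, \<pi>2} \<in> finite_partitions S"
proof -
  interpret algebra UNIV S by (rule S)
  have "common_refinement {\<pi>1, \<pi>2} \<subseteq> S"
    using assms by (auto simp: finite_partitions_def elim!: common_refinement_pairE)
  then show ?thesis
    using assms by (auto simp: finite_partitions_def
      intro: partition_on_common_refinement finite_common_refinement)
qed

lemma eventually_refinement_filter:
  assumes S: "algebra UNIV S"
  shows "eventually Q (refinement_filter S) \<longleftrightarrow>
    (\<exists>\<pi>'\<in>finite_partitions S. \<forall>\<pi> c. tagged_partition S \<pi> c \<and> refines UNIV \<pi> \<pi>' \<longrightarrow> Q (\<pi>, c))"
proof -
  define R where "R \<pi>' = {(\<pi>, c). tagged_partition S \<pi> c \<and> refines UNIV \<pi> \<pi>'}" for \<pi>'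
  have "{UNIV} \<in> finite_partitions S"
    using algebra.top[OF S] by (simp add: finite_partitions_def partition_on_space)
  moreover have "\<exists>\<pi>\<in>finite_partitions S. R \<pi> \<subseteq> R \<pi>1 \<inter> R \<pi>2"
    if "\<pi>1 \<in> finite_partitions S" "\<pi>2 \<in> finite_partitions S" for \<pi>1 \<pi>2
  proof (intro bexI)
    show "common_refinement {\<pi>1, \<pi>2} \<in> finite_partitions S"
      using that by (rule finite_partitions_common_refinement[OF S])
    have "refines UNIV (common_refinement {\<pi>1, \<pi>2}) \<pi>" if "\<pi> \<in> {\<pi>1, \<pi>2}" for \<pi>
      using that \<open>\<pi>1 \<in> _\<close> \<open>\<pi>2 \<in> _\<close>
      by (intro refines_common_refinement) (auto simp: finite_partitions_def)
    then show "R (common_refinement {\<pi>1, \<pi>2}) \<subseteq> R \<pi>1 \<inter> R \<pi>2"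
      by (auto simp: R_def intro: refines_trans)
  qed
  ultimately show ?thesis
    unfolding refinement_filter_def R_def[symmetric]
    by (subst eventually_INF_base) (auto simp: inf_principal eventually_principal R_def)
qed

lemma refinement_filter_nontrivial:
  assumes "algebra UNIV S"
  shows "refinement_filter S \<noteq> bot"
proof
  assume "refinement_filter S = bot"
  then obtain \<pi>' where \<pi>': "\<pi>' \<in> finite_partitions S"
    and none: "\<And>\<pi> c. \<not> (tagged_partition S \<pi> c \<and> refines UNIV \<pi> \<pi>')"
    using eventually_refinement_filter[OF assms, of "\<lambda>_. False"] by auto
  have "tagged_partition S \<pi>' (\<lambda>C. SOME z. z \<in> C)"
    using \<pi>' by (auto simp: tagged_partition_def finite_partitions_def partition_on_def some_in_eq)
  moreover have "refines UNIV \<pi>' \<pi>'"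
    using \<pi>' by (simp add: finite_partitions_def refines_refl)
  ultimately show False using none by blast
qed

lemma eventually_refinement_filter_splits:
  assumes S: "algebra UNIV S" and A: "A \<in> S"
  shows "eventually (\<lambda>(\<pi>, c). tagged_partition S \<pi> c \<and> (\<forall>C\<in>\<pi>. C \<subseteq> A \<or> C \<subseteq> - A))
           (refinement_filter S)"
proof -
  have "{A, - A} - {{}} \<in> finite_partitions S"
    using A algebra.compl_sets[OF S A]
    by (auto simp: finite_partitions_def partition_on_def pairwise_def disjnt_def Compl_eq_Diff_UNIV)
  then show ?thesis
    unfolding eventually_refinement_filter[OF S]
    by (rule bexI[rotated]) (auto simp: refines_def)
qed

lemma riemann_sum_add:
  "riemann_sum P (\<lambda>\<omega>. f \<omega> + g \<omega>) = (\<lambda>x. riemann_sum P f x + riemann_sum P g x)"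
  by (auto simp: riemann_sum_def distrib_left sum.distrib)

lemma riemann_sum_cmult: "riemann_sum P (\<lambda>\<omega>. a * f \<omega>) = (\<lambda>x. a * riemann_sum P f x)"
  by (auto simp: riemann_sum_def sum_distrib_left mult_ac)

lemma riemann_sum_mono:
  assumes "fa_probability S P" and "tagged_partition S \<pi> c" and "\<And>\<omega>. f \<omega> \<le> g \<omega>"
  shows "riemann_sum P f (\<pi>, c) \<le> riemann_sum P g (\<pi>, c)"
  using assms unfolding riemann_sum_def tagged_partition_def finite_partitions_def fa_probability_def
  by (auto intro!: sum_mono mult_left_mono)

lemma riemann_sum_const:
  assumes S: "algebra UNIV S" and P: "fa_probability S P" and \<pi>: "tagged_partition S \<pi> c"
  shows "riemann_sum P (\<lambda>_. a) (\<pi>, c) = a"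
proof -
  have "(\<Sum>C\<in>\<pi>. P C) = P UNIV"
    using \<pi> fa_probability_Union[OF S P, of \<pi>]
    by (auto simp: tagged_partition_def finite_partitions_def partition_on_def)
  then show ?thesis
    using P by (simp add: riemann_sum_def fa_probability_def sum_distrib_right[symmetric])
qed

lemma riemann_sum_abs_le:
  assumes S: "algebra UNIV S" and P: "fa_probability S P" and \<pi>: "tagged_partition S \<pi> c"
    and g: "\<And>\<omega>. \<bar>g \<omega>\<bar> \<le> B"
  shows "\<bar>riemann_sum P g (\<pi>, c)\<bar> \<le> B"
proof -
  have "- B \<le> g \<omega>" "g \<omega> \<le> B" for \<omega> using g[of \<omega>] by auto
  then show ?thesis
    using riemann_sum_mono[OF P \<pi>, of g "\<lambda>_. B"] riemann_sum_mono[OF P \<pi>, of "\<lambda>_. - B" g]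
      riemann_sum_const[OF S P \<pi>]
    by (auto simp: abs_le_iff)
qed

lemma riemann_sum_indicator:
  assumes S: "algebra UNIV S" and P: "fa_probability S P" and A: "A \<in> S"
    and \<pi>: "tagged_partition S \<pi> c" and split: "\<forall>C\<in>\<pi>. C \<subseteq> A \<or> C \<subseteq> - A"
  shows "riemann_sum P (indicator A) (\<pi>, c) = P A"
proof -
  have \<pi>S: "finite \<pi>" "\<pi> \<subseteq> S" "disjoint \<pi>" "\<Union>\<pi> = UNIV"
    using \<pi> by (auto simp: tagged_partition_def finite_partitions_def partition_on_def)
  have "c C \<in> A \<longleftrightarrow> C \<subseteq> A" if "C \<in> \<pi>" for C
    using \<pi> split that by (auto simp: tagged_partition_def)
  then have "riemann_sum P (indicator A) (\<pi>, c) = (\<Sum>C\<in>\<pi>. if C \<subseteq> A then P C else 0)"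
    by (auto simp: riemann_sum_def indicator_def intro: sum.cong)
  also have "\<dots> = (\<Sum>C\<in>{C\<in>\<pi>. C \<subseteq> A}. P C)"
    using \<pi>S(1) by (simp add: sum.inter_filter)
  also have "\<dots> = P (\<Union>{C\<in>\<pi>. C \<subseteq> A})"
    using \<pi>S by (intro fa_probability_Union[OF S P, symmetric]) (auto simp: pairwise_def)
  also have "\<Union>{C\<in>\<pi>. C \<subseteq> A} = A"
    using \<pi>S(4) split by blast
  finally show ?thesis .
qed

lemma tendsto_riemann_sum_Lim:
  assumes S: "algebra UNIV S" and P: "fa_probability S P"
    and U: "U \<le> refinement_filter S" "ultrafilter U" and g: "bounded (range g)"
  shows "(riemann_sum P g \<longlongrightarrow> Lim U (riemann_sum P g)) U"
proof -
  obtain B where B: "\<And>\<omega>. \<bar>g \<omega>\<bar> \<le> B" using g by (auto simp: bounded_iff)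
  have "eventually (\<lambda>(\<pi>, c). tagged_partition S \<pi> c) U"
    using eventually_refinement_filter_splits[OF S algebra.top[OF S]] U(1)
    by (auto elim: eventually_mono dest: filter_leD)
  then have "eventually (\<lambda>x. \<bar>riemann_sum P g x\<bar> \<le> B) U"
  proof (rule eventually_mono, safe)
    fix \<pi> c assume "tagged_partition S \<pi> c"
    then show "\<bar>riemann_sum P g (\<pi>, c)\<bar> \<le> B" by (rule riemann_sum_abs_le[OF S P _ B])
  qed
  then show ?thesis by (rule tendsto_Lim_ultrafilter[OF U(2)])
qed

lemma fa_probability_mean:
  assumes S: "algebra UNIV S" and P: "fa_probability S P"
  obtains I :: "('w \<Rightarrow> real) \<Rightarrow> real" where
    "\<And>f g. bounded (range f) \<Longrightarrow> bounded (range g) \<Longrightarrow> I (\<lambda>\<omega>. f \<omega> + g \<omega>) = I f + I g"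
    "\<And>a f. bounded (range f) \<Longrightarrow> I (\<lambda>\<omega>. a * f \<omega>) = a * I f"
    "\<And>f g. bounded (range f) \<Longrightarrow> bounded (range g) \<Longrightarrow> (\<And>\<omega>. f \<omega> \<le> g \<omega>) \<Longrightarrow> I f \<le> I g"
    "\<And>A. A \<in> S \<Longrightarrow> I (indicator A) = P A"
proof -
  obtain U where U: "U \<le> refinement_filter S" "ultrafilter U"
    using ultrafilter_exists[OF refinement_filter_nontrivial[OF S]] .
  have U_nontrivial: "U \<noteq> bot" using U(2) by (simp add: ultrafilter_def)
  have splits: "eventually (\<lambda>(\<pi>, c). tagged_partition S \<pi> c \<and> (\<forall>C\<in>\<pi>. C \<subseteq> A \<or> C \<subseteq> - A)) U"
    if "A \<in> S" for A
    using eventually_refinement_filter_splits[OF S that] U(1) by (rule filter_leD[rotated])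
  define I where "I g = Lim U (riemann_sum P g)" for g
  have I: "(riemann_sum P g \<longlongrightarrow> I g) U" if "bounded (range g)" for g
    unfolding I_def using S P U that by (rule tendsto_riemann_sum_Lim)
  show ?thesis
  proof
    fix f g :: "'w \<Rightarrow> real" assume "bounded (range f)" "bounded (range g)"
    then have "(riemann_sum P (\<lambda>\<omega>. f \<omega> + g \<omega>) \<longlongrightarrow> I f + I g) U"
      by (simp add: riemann_sum_add tendsto_add I)
    then show "I (\<lambda>\<omega>. f \<omega> + g \<omega>) = I f + I g"
      unfolding I_def by (rule tendsto_Lim[OF U_nontrivial])
  next
    fix a and f :: "'w \<Rightarrow> real" assume "bounded (range f)"
    then have "(riemann_sum P (\<lambda>\<omega>. a * f \<omega>) \<longlongrightarrow> a * I f) U"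
      by (simp add: riemann_sum_cmult tendsto_mult_left I)
    then show "I (\<lambda>\<omega>. a * f \<omega>) = a * I f"
      unfolding I_def by (rule tendsto_Lim[OF U_nontrivial])
  next
    fix f g :: "'w \<Rightarrow> real"
    assume "bounded (range f)" "bounded (range g)" "\<And>\<omega>. f \<omega> \<le> g \<omega>"
    moreover have "eventually (\<lambda>x. riemann_sum P f x \<le> riemann_sum P g x) U"
      using splits[OF algebra.top[OF S]]
      by (rule eventually_mono) (auto intro: riemann_sum_mono[OF P] calculation)
    ultimately show "I f \<le> I g"
      using U_nontrivial by (intro tendsto_le[OF _ I I])
  next
    fix A assume A: "A \<in> S"
    have "eventually (\<lambda>x. riemann_sum P (indicator A) x = P A) U"
      using splits[OF A] by (rule eventually_mono) (auto intro: riemann_sum_indicator[OF S P A])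
    then have "(riemann_sum P (indicator A) \<longlongrightarrow> P A) U" by (rule tendsto_eventually)
    then show "I (indicator A) = P A"
      unfolding I_def by (rule tendsto_Lim[OF U_nontrivial])
  qed
qed

section \<open>Row densities of a grid\<close>

lemma card_Collect_less_Suc:
  "card {k. k < Suc n \<and> R k} = card {k. k < n \<and> R k} + (if R n then 1 else 0)"
proof -
  have "{k. k < Suc n \<and> R k} = {k. k < n \<and> R k} \<union> (if R n then {n} else {})"
    by (auto simp: less_Suc_eq)
  then show ?thesis by (auto simp: card_insert_if)
qed

lemma card_first_elements:
  "card {k. k < (n::nat) \<and> Q k \<and> card {j. j < k \<and> Q j} < m} = min m (card {k. k < n \<and> Q k})"
  by (induction n) (auto simp: card_Collect_less_Suc)

definition is_grid :: "('w \<Rightarrow> nat \<Rightarrow> nat \<Rightarrow> 'v) \<Rightarrow> bool" where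
  "is_grid h \<longleftrightarrow> (\<forall>\<omega> n k \<omega>' n' k'. h \<omega> n k = h \<omega>' n' k' \<longrightarrow> n = n' \<and> k = k' \<and> h \<omega> n = h \<omega>' n)"

lemma is_gridD:
  assumes "is_grid h" and "h \<omega> n k = h \<omega>' n' k'"
  shows "n = n'" "k = k'" "h \<omega> n = h \<omega>' n"
  using assms unfolding is_grid_def by blast+

lemma grid_thinning:
  fixes h :: "'w \<Rightarrow> nat \<Rightarrow> nat \<Rightarrow> 'v"
  assumes grid: "is_grid h"
  shows "\<exists>F \<subseteq> E \<inter> {h \<omega> n k | \<omega> n k. True}. \<forall>\<omega> n.
           card {k. k < n \<and> h \<omega> n k \<in> F} = min (m n (h \<omega> n)) (card {k. k < n \<and> h \<omega> n k \<in> E})"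
proof -
  define first where "first \<omega> n k \<longleftrightarrow> card {j. j < k \<and> h \<omega> n j \<in> E} < m n (h \<omega> n)" for \<omega> n k
  \<comment> \<open>Membership in \<open>F\<close> does not depend on the representation \<open>z = h \<omega> n k\<close>, because
    a grid point determines \<open>n\<close>, \<open>k\<close> and its whole row.\<close>
  define F where "F = {z\<in>E. \<exists>\<omega> n k. z = h \<omega> n k \<and> first \<omega> n k}"
  have "h \<omega> n k \<in> F \<longleftrightarrow> h \<omega> n k \<in> E \<and> first \<omega> n k" for \<omega> n k
  proof
    assume "h \<omega> n k \<in> F"
    then obtain \<omega>' n' k' where in_E: "h \<omega> n k \<in> E" and eq: "h \<omega> n k = h \<omega>' n' k'"
      and first': "first \<omega>' n' k'"
      by (auto simp: F_def)
    have "first \<omega> n k" using first' is_gridD[OF grid eq] by (simp add: first_def)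
    with in_E show "h \<omega> n k \<in> E \<and> first \<omega> n k" ..
  qed (auto simp: F_def)
  then have "card {k. k < n \<and> h \<omega> n k \<in> F} = min (m n (h \<omega> n)) (card {k. k < n \<and> h \<omega> n k \<in> E})"
    for \<omega> n
    using card_first_elements[of n "\<lambda>k. h \<omega> n k \<in> E" "m n (h \<omega> n)"] by (simp add: first_def)
  moreover have "F \<subseteq> E \<inter> {h \<omega> n k | \<omega> n k. True}" by (auto simp: F_def)
  ultimately show ?thesis by blast
qed

definition row_frequency :: "('w \<Rightarrow> nat \<Rightarrow> nat \<Rightarrow> 'v) \<Rightarrow> 'v set \<Rightarrow> 'w \<Rightarrow> nat \<Rightarrow> real" where
  "row_frequency h A \<omega> n = real (card {k. k < n \<and> h \<omega> n k \<in> A}) / real n"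

lemma row_frequency_bounds: "row_frequency h A \<omega> n \<in> {0..1}"
proof -
  have "card {k. k < n \<and> h \<omega> n k \<in> A} \<le> card {..<n}" by (rule card_mono) auto
  then show ?thesis by (auto simp: row_frequency_def divide_le_eq_1)
qed

lemma row_frequency_Un:
  assumes "A \<inter> B = {}"
  shows "row_frequency h (A \<union> B) \<omega> n = row_frequency h A \<omega> n + row_frequency h B \<omega> n"
proof -
  have "{k. k < n \<and> h \<omega> n k \<in> A \<union> B} = {k. k < n \<and> h \<omega> n k \<in> A} \<union> {k. k < n \<and> h \<omega> n k \<in> B}"
    by auto
  then have "card {k. k < n \<and> h \<omega> n k \<in> A \<union> B} =
      card {k. k < n \<and> h \<omega> n k \<in> A} + card {k. k < n \<and> h \<omega> n k \<in> B}"
    using assms by (simp add: card_Un_disjoint disjoint_iff)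
  then show ?thesis by (simp add: row_frequency_def add_divide_distrib)
qed

lemma row_frequency_eq_1:
  assumes "n > 0" and "\<forall>k. h \<omega> n k \<in> A"
  shows "row_frequency h A \<omega> n = 1"
  using assms by (simp add: row_frequency_def)

lemma row_frequency_floor:
  assumes "0 \<le> \<alpha>"
    and "card {k. k < n \<and> h \<omega> n k \<in> F} = nat \<lfloor>\<alpha> * real (card {k. k < n \<and> h \<omega> n k \<in> E})\<rfloor>"
  shows "\<bar>row_frequency h F \<omega> n - \<alpha> * row_frequency h E \<omega> n\<bar> \<le> inverse (real n)"
proof -
  define t where "t = \<alpha> * real (card {k. k < n \<and> h \<omega> n k \<in> E})"
  have "0 \<le> t" using assms(1) by (simp add: t_def)
  then have "real (nat \<lfloor>t\<rfloor>) = of_int \<lfloor>t\<rfloor>" by simp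
  then have "\<bar>real (nat \<lfloor>t\<rfloor>) - t\<bar> \<le> 1"
    using of_int_floor_le[of t] real_of_int_floor_gt_diff_one[of t] by linarith
  then have "\<bar>real (nat \<lfloor>t\<rfloor>) - t\<bar> / real n \<le> inverse (real n)"
    by (simp add: divide_right_mono inverse_eq_divide)
  then show ?thesis
    using assms(2) by (simp add: row_frequency_def t_def diff_divide_distrib[symmetric] abs_divide)
qed

lemma grid_thinning_frequency:
  fixes h :: "'w \<Rightarrow> nat \<Rightarrow> nat \<Rightarrow> 'v"
  assumes grid: "is_grid h" and \<alpha>: "0 \<le> \<alpha>" "\<alpha> \<le> 1"
  shows "\<exists>F \<subseteq> E \<inter> {h \<omega> n k | \<omega> n k. True}. \<forall>\<omega>.
           ((\<lambda>n. row_frequency h F \<omega> n - \<alpha> * row_frequency h E \<omega> n) \<longlongrightarrow> 0) sequentially"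
proof -
  define m where "m n r = nat \<lfloor>\<alpha> * real (card {k. k < n \<and> r k \<in> E})\<rfloor>" for n and r :: "nat \<Rightarrow> 'v"
  obtain F where F: "F \<subseteq> E \<inter> {h \<omega> n k | \<omega> n k. True}"
    and card_F: "\<forall>\<omega> n. card {k. k < n \<and> h \<omega> n k \<in> F} = min (m n (h \<omega> n)) (card {k. k < n \<and> h \<omega> n k \<in> E})"
    using grid_thinning[OF grid] by blast
  have "nat \<lfloor>\<alpha> * real c\<rfloor> \<le> c" for c
  proof -
    have "\<alpha> * real c \<le> real c" using \<alpha> by (simp add: mult_left_le_one_le)
    then have "\<lfloor>\<alpha> * real c\<rfloor> \<le> int c" using floor_mono by fastforce
    then show ?thesis by (simp add: nat_le_iff)
  qed
  then have "\<bar>row_frequency h F \<omega> n - \<alpha> * row_frequency h E \<omega> n\<bar> \<le> inverse (real n)" for \<omega> n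
    using card_F by (intro row_frequency_floor \<alpha>(1)) (simp add: m_def min_absorb1)
  then have "((\<lambda>n. row_frequency h F \<omega> n - \<alpha> * row_frequency h E \<omega> n) \<longlongrightarrow> 0) sequentially" for \<omega>
    by (intro Lim_null_comparison[OF always_eventually lim_inverse_n]) simp
  with F show ?thesis by blast
qed

definition row_density :: "nat filter \<Rightarrow> ('w \<Rightarrow> nat \<Rightarrow> nat \<Rightarrow> 'v) \<Rightarrow> 'v set \<Rightarrow> 'w \<Rightarrow> real" where
  "row_density U h A \<omega> = Lim U (row_frequency h A \<omega>)"

lemma tendsto_row_density:
  assumes "ultrafilter U"
  shows "(row_frequency h A \<omega> \<longlongrightarrow> row_density U h A \<omega>) U"
proof -
  have "\<bar>row_frequency h A \<omega> n\<bar> \<le> 1" for n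
    using row_frequency_bounds[of h A \<omega> n] by auto
  then show ?thesis
    unfolding row_density_def by (intro tendsto_Lim_ultrafilter[OF assms] always_eventually) auto
qed

lemma row_density_bounds:
  assumes "ultrafilter U"
  shows "row_density U h A \<omega> \<in> {0..1}"
  using assms row_frequency_bounds[of h A \<omega>]
  by (auto simp: ultrafilter_def intro!: tendsto_lowerbound[OF tendsto_row_density]
      tendsto_upperbound[OF tendsto_row_density] always_eventually)

lemma row_density_Un:
  assumes U: "ultrafilter U" and "A \<inter> B = {}"
  shows "row_density U h (A \<union> B) \<omega> = row_density U h A \<omega> + row_density U h B \<omega>"
proof -
  have "row_frequency h (A \<union> B) \<omega> = (\<lambda>n. row_frequency h A \<omega> n + row_frequency h B \<omega> n)"
    using assms(2) by (simp add: row_frequency_Un fun_eq_iff)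
  then have "(row_frequency h (A \<union> B) \<omega> \<longlongrightarrow> row_density U h A \<omega> + row_density U h B \<omega>) U"
    by (simp add: tendsto_add tendsto_row_density[OF U])
  then show ?thesis
    using U unfolding row_density_def by (intro tendsto_Lim) (simp_all add: ultrafilter_def)
qed

lemma row_density_eq_1:
  assumes U: "ultrafilter U" "U \<le> sequentially"
    and A: "eventually (\<lambda>n. \<forall>k. h \<omega> n k \<in> A) sequentially"
  shows "row_density U h A \<omega> = 1"
proof -
  have "eventually (\<lambda>n. row_frequency h A \<omega> n = 1) sequentially"
    using A eventually_gt_at_top[of 0] by eventually_elim (simp add: row_frequency_eq_1)
  then have "(row_frequency h A \<omega> \<longlongrightarrow> 1) U"
    by (intro tendsto_eventually filter_leD[OF U(2)])
  then show ?thesis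
    using U unfolding row_density_def by (intro tendsto_Lim) (simp_all add: ultrafilter_def)
qed

lemma row_density_thinning:
  assumes U: "ultrafilter U" "U \<le> sequentially"
    and grid: "is_grid h" and \<alpha>: "0 \<le> \<alpha>" "\<alpha> \<le> 1"
  shows "\<exists>F \<subseteq> E \<inter> {h \<omega> n k | \<omega> n k. True}. \<forall>\<omega>. row_density U h F \<omega> = \<alpha> * row_density U h E \<omega>"
proof -
  obtain F where F: "F \<subseteq> E \<inter> {h \<omega> n k | \<omega> n k. True}" and
    lim: "\<forall>\<omega>. ((\<lambda>n. row_frequency h F \<omega> n - \<alpha> * row_frequency h E \<omega> n) \<longlongrightarrow> 0) sequentially"
    using grid_thinning_frequency[OF grid \<alpha>] by blast
  have "row_density U h F \<omega> = \<alpha> * row_density U h E \<omega>" for \<omega>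
  proof -
    have "((\<lambda>n. row_frequency h F \<omega> n - \<alpha> * row_frequency h E \<omega> n) \<longlongrightarrow> 0) U"
      by (rule tendsto_mono[OF U(2)]) (use lim in blast)
    from tendsto_add[OF this tendsto_mult_left[OF tendsto_row_density[OF U(1), of h E \<omega>], of \<alpha>]]
    have "(row_frequency h F \<omega> \<longlongrightarrow> \<alpha> * row_density U h E \<omega>) U" by simp
    then show ?thesis
      using U unfolding row_density_def by (intro tendsto_Lim) (simp_all add: ultrafilter_def)
  qed
  with F show ?thesis by blast
qed

section \<open>A grid in the sequence space\<close>

text \<open>Since \<open>n \<le> prod_encode (n, k)\<close>, the mark \<open>y\<close> lies beyond the copied prefix and
  identifies \<open>(n, k)\<close>.\<close>

definition grid_point :: "(nat \<Rightarrow> 'a) \<Rightarrow> 'a \<Rightarrow> 'a \<Rightarrow> nat \<Rightarrow> nat \<Rightarrow> nat \<Rightarrow> 'a" where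
  "grid_point p x y n k = (\<lambda>i. if i < n then p i else if i = prod_encode (n, k) then y else x)"

lemma grid_point_mark_position:
  assumes "x \<noteq> y" and "n \<le> n'" and "grid_point p x y n k = grid_point p' x y n' k'"
  shows "prod_encode (n, k) = prod_encode (n', k')"
proof -
  have "n' \<le> prod_encode (n', k')" by (rule le_prod_encode_1)
  moreover have "grid_point p x y n k (prod_encode (n', k')) = grid_point p' x y n' k' (prod_encode (n', k'))"
    using assms(3) by simp
  ultimately show ?thesis using assms(1,2) by (auto simp: grid_point_def split: if_splits)
qed

lemma grid_point_eqD:
  assumes "x \<noteq> y" and eq: "grid_point p x y n k = grid_point p' x y n' k'"
  shows "n = n'" "k = k'" "\<forall>i<n. p i = p' i"
proof -
  have "prod_encode (n, k) = prod_encode (n', k')"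
    using grid_point_mark_position[OF assms(1) _ eq] grid_point_mark_position[OF assms(1) _ eq[symmetric]]
    by (cases "n \<le> n'") auto
  then show "n = n'" "k = k'" by (auto simp: prod_encode_eq)
  have pointwise: "grid_point p x y n k i = grid_point p' x y n' k' i" for i
    using eq by simp
  show "\<forall>i<n. p i = p' i"
  proof (intro allI impI)
    fix i assume "i < n"
    then show "p i = p' i" using pointwise[of i] \<open>n = n'\<close> by (simp add: grid_point_def)
  qed
qed

lemma countable_grid_points:
  assumes "countable D"
  shows "countable {grid_point p x y n k | p n k. \<forall>i<n. p i \<in> D}"
proof -
  define g where "g = (\<lambda>(n, k, ps). grid_point (\<lambda>i. ps ! i) x y n k)"
  have "{grid_point p x y n k | p n k. \<forall>i<n. p i \<in> D} \<subseteq> g ` (UNIV \<times> UNIV \<times> lists D)"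
  proof safe
    fix p :: "nat \<Rightarrow> 'a" and n k :: nat assume "\<forall>i<n. p i \<in> D"
    then have "map p [0..<n] \<in> lists D" by auto
    moreover have "grid_point p x y n k = g (n, k, map p [0..<n])"
      by (auto simp: g_def grid_point_def)
    ultimately show "grid_point p x y n k \<in> g ` (UNIV \<times> UNIV \<times> lists D)" by blast
  qed
  moreover have "countable (g ` (UNIV \<times> UNIV \<times> lists D))"
    using assms by (intro countable_image countable_SIGMA countable_lists) auto
  ultimately show ?thesis by (rule countable_subset)
qed

lemma eventually_grid_point_in_open:
  fixes \<omega> :: "nat \<Rightarrow> 'a::topological_space"
  assumes p: "\<And>i. ((\<lambda>n. p n i) \<longlongrightarrow> \<omega> i) sequentially" and U: "open U" "\<omega> \<in> U"
  shows "eventually (\<lambda>n. \<forall>k. grid_point (p n) x y n k \<in> U) sequentially"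
proof -
  obtain X where X: "\<omega> \<in> (\<Pi>\<^sub>E i\<in>UNIV. X i)" "\<And>i. open (X i)" "finite {i. X i \<noteq> UNIV}"
    "(\<Pi>\<^sub>E i\<in>UNIV. X i) \<subseteq> U"
    using product_topology_open_contains_basis[of "\<lambda>_. euclidean" UNIV U \<omega>] U
    by (auto simp: open_fun_def)
  have "eventually (\<lambda>n. i < n \<and> p n i \<in> X i) sequentially" for i
  proof -
    have "\<omega> i \<in> X i" using X(1) by (auto simp: PiE_iff)
    then show ?thesis
      using eventually_conj[OF eventually_gt_at_top[of i] topological_tendstoD[OF p X(2)]] by simp
  qed
  then have "eventually (\<lambda>n. \<forall>i\<in>{i. X i \<noteq> UNIV}. i < n \<and> p n i \<in> X i) sequentially"
    using X(3) by (intro eventually_ball_finite) auto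
  then show ?thesis
  proof (rule eventually_mono)
    fix n assume n: "\<forall>i\<in>{i. X i \<noteq> UNIV}. i < n \<and> p n i \<in> X i"
    have "grid_point (p n) x y n k i \<in> X i" for k i
      using n[rule_format, of i] by (cases "X i = UNIV") (auto simp: grid_point_def)
    then have "grid_point (p n) x y n k \<in> (\<Pi>\<^sub>E i\<in>UNIV. X i)" for k
      by (simp add: PiE_iff)
    then show "\<forall>k. grid_point (p n) x y n k \<in> U" using X(4) by blast
  qed
qed

lemma sequence_space_grid:
  fixes D :: "'a::first_countable_topology set" and x y :: 'a
  assumes D: "countable D" "closure D = UNIV" and xy: "x \<noteq> y"
  obtains h :: "(nat \<Rightarrow> 'a) \<Rightarrow> nat \<Rightarrow> nat \<Rightarrow> nat \<Rightarrow> 'a" where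
    "is_grid h" "countable {h \<omega> n k | \<omega> n k. True}"
    "\<And>U \<omega>. open U \<Longrightarrow> \<omega> \<in> U \<Longrightarrow> eventually (\<lambda>n. \<forall>k. h \<omega> n k \<in> U) sequentially"
proof -
  have "\<forall>z. \<exists>s. (\<forall>n. s n \<in> D) \<and> (s \<longlongrightarrow> z) sequentially"
    using D(2) closure_sequential by blast
  then obtain s where s: "\<And>z n. s z n \<in> D" "\<And>z. (s z \<longlongrightarrow> z) sequentially"
    by metis
  define h where "h \<omega> n = grid_point (\<lambda>i. s (\<omega> i) n) x y n" for \<omega> n
  show ?thesis
  proof
    show "is_grid h" unfolding is_grid_def
    proof (intro allI impI)
      fix \<omega> \<omega>' :: "nat \<Rightarrow> 'a" and n k n' k' :: nat assume "h \<omega> n k = h \<omega>' n' k'"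
      note eq = grid_point_eqD[OF xy this[unfolded h_def]]
      then have "h \<omega> n = h \<omega>' n" by (auto simp: h_def grid_point_def fun_eq_iff)
      with eq show "n = n' \<and> k = k' \<and> h \<omega> n = h \<omega>' n" by blast
    qed
  next
    have "{h \<omega> n k | \<omega> n k. True} \<subseteq> {grid_point p x y n k | p n k. \<forall>i<n. p i \<in> D}"
      using s(1) by (auto simp: h_def)
    then show "countable {h \<omega> n k | \<omega> n k. True}"
      using countable_grid_points[OF D(1)] by (rule countable_subset)
  next
    fix U and \<omega> :: "nat \<Rightarrow> 'a" assume "open U" "\<omega> \<in> U"
    then show "eventually (\<lambda>n. \<forall>k. h \<omega> n k \<in> U) sequentially"
      unfolding h_def using s(2) by (rule eventually_grid_point_in_open[rotated 1])
  qed
qed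

lemma countable_in_sigma_algebra:
  fixes S :: "'a::t1_space set set"
  assumes S: "sigma_algebra UNIV S" and opens: "\<And>U. open U \<Longrightarrow> U \<in> S" and "countable Z"
  shows "Z \<in> S"
proof -
  interpret sigma_algebra UNIV S by (rule S)
  have "{z} \<in> S" for z
  proof -
    have "UNIV - (UNIV - {z}) \<in> S"
      by (intro compl_sets opens open_Diff open_UNIV closed_singleton)
    then show ?thesis by (simp only: Diff_Diff_Int Int_UNIV_left)
  qed
  then have "(\<Union>z\<in>Z. {z}) \<in> S" using \<open>countable Z\<close> by (intro countable_UN') auto
  then show ?thesis by simp
qed

section \<open>Mixtures\<close>

lemma fa_probability_mixture:
  fixes \<kappa> :: "'w set \<Rightarrow> 'w \<Rightarrow> real"
  assumes S: "algebra UNIV S" and P: "fa_probability S P"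
    and bounds: "\<And>A \<omega>. \<kappa> A \<omega> \<in> {0..1}"
    and add: "\<And>A B \<omega>. A \<inter> B = {} \<Longrightarrow> \<kappa> (A \<union> B) \<omega> = \<kappa> A \<omega> + \<kappa> B \<omega>"
    and total: "\<And>\<omega>. \<kappa> UNIV \<omega> = 1"
    and split: "\<And>E \<alpha>. E \<in> S \<Longrightarrow> 0 \<le> \<alpha> \<Longrightarrow> \<alpha> \<le> 1 \<Longrightarrow> \<exists>F\<in>S. F \<subseteq> E \<and> (\<forall>\<omega>. \<kappa> F \<omega> = \<alpha> * \<kappa> E \<omega>)"
  obtains Q where "fa_probability S Q" "strongly_nonatomic S Q"
    "\<And>A. A \<in> S \<Longrightarrow> (\<And>\<omega>. \<omega> \<in> A \<Longrightarrow> \<kappa> A \<omega> = 1) \<Longrightarrow> P A \<le> Q A"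
proof -
  obtain I :: "('w \<Rightarrow> real) \<Rightarrow> real"
    where I_add: "\<And>f g. bounded (range f) \<Longrightarrow> bounded (range g) \<Longrightarrow> I (\<lambda>\<omega>. f \<omega> + g \<omega>) = I f + I g"
    and I_cmult: "\<And>a f. bounded (range f) \<Longrightarrow> I (\<lambda>\<omega>. a * f \<omega>) = a * I f"
    and I_mono: "\<And>f g. bounded (range f) \<Longrightarrow> bounded (range g) \<Longrightarrow> (\<And>\<omega>. f \<omega> \<le> g \<omega>) \<Longrightarrow> I f \<le> I g"
    and I_indicator: "\<And>A. A \<in> S \<Longrightarrow> I (indicator A) = P A"
    using fa_probability_mean[OF S P] by blast
  define Q where "Q A = I (\<kappa> A)" for A
  have bounded: "bounded (range (\<kappa> A))" "bounded (range (indicator A :: _ \<Rightarrow> real))" for A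
    using bounds by (auto intro!: bounded_subset[OF bounded_closed_interval[of 0 1]] simp: indicator_def)
  show ?thesis
  proof
    have "0 \<le> Q A" for A
      using I_mono[of "\<lambda>\<omega>. 0 * \<kappa> A \<omega>" "\<kappa> A"] I_cmult[of "\<kappa> A" 0] bounds bounded
      by (simp add: Q_def)
    moreover have "\<kappa> UNIV = indicator UNIV"
      using total by (simp add: fun_eq_iff)
    then have "Q UNIV = 1"
      using I_indicator[OF algebra.top[OF S]] P by (simp add: Q_def fa_probability_def)
    moreover have "Q (A \<union> B) = Q A + Q B" if "A \<inter> B = {}" for A B
    proof -
      have "\<kappa> (A \<union> B) = (\<lambda>\<omega>. \<kappa> A \<omega> + \<kappa> B \<omega>)" using add[OF that] by (simp add: fun_eq_iff)
      then show ?thesis using I_add bounded by (simp add: Q_def)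
    qed
    ultimately show "fa_probability S Q" by (simp add: fa_probability_def)
  next
    show "strongly_nonatomic S Q"
      unfolding strongly_nonatomic_def
    proof (intro ballI allI impI)
      fix E and \<alpha> :: real assume "E \<in> S" "0 \<le> \<alpha> \<and> \<alpha> \<le> 1"
      then obtain F where "F \<in> S" "F \<subseteq> E" and "\<forall>\<omega>. \<kappa> F \<omega> = \<alpha> * \<kappa> E \<omega>"
        using split by blast
      moreover from this have "\<kappa> F = (\<lambda>\<omega>. \<alpha> * \<kappa> E \<omega>)" by (simp add: fun_eq_iff)
      then have "Q F = \<alpha> * Q E" using I_cmult[OF bounded(1)] by (simp add: Q_def)
      ultimately show "\<exists>F\<in>S. F \<subseteq> E \<and> Q F = \<alpha> * Q E" by blast
    qed
  next
    fix A assume "A \<in> S" and "\<And>\<omega>. \<omega> \<in> A \<Longrightarrow> \<kappa> A \<omega> = 1"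
    then have "indicator A \<omega> \<le> \<kappa> A \<omega>" for \<omega>
      using bounds by (auto simp: indicator_def)
    then have "I (indicator A) \<le> I (\<kappa> A)" by (intro I_mono bounded)
    then show "P A \<le> Q A" using I_indicator[OF \<open>A \<in> S\<close>] by (simp add: Q_def)
  qed
qed

lemma sequence_space_kernel:
  fixes S :: "(nat \<Rightarrow> 'a::metric_space) set set" and D :: "'a set" and x y :: 'a
  assumes D: "countable D" "closure D = UNIV" and xy: "x \<noteq> y"
    and sigma: "sigma_algebra UNIV S" and opens: "\<And>U. open U \<Longrightarrow> U \<in> S"
  obtains \<kappa> :: "(nat \<Rightarrow> 'a) set \<Rightarrow> (nat \<Rightarrow> 'a) \<Rightarrow> real" where
    "\<And>A \<omega>. \<kappa> A \<omega> \<in> {0..1}"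
    "\<And>A B \<omega>. A \<inter> B = {} \<Longrightarrow> \<kappa> (A \<union> B) \<omega> = \<kappa> A \<omega> + \<kappa> B \<omega>"
    "\<And>U \<omega>. open U \<Longrightarrow> \<omega> \<in> U \<Longrightarrow> \<kappa> U \<omega> = 1"
    "\<And>E \<alpha>. 0 \<le> \<alpha> \<Longrightarrow> \<alpha> \<le> 1 \<Longrightarrow> \<exists>F\<in>S. F \<subseteq> E \<and> (\<forall>\<omega>. \<kappa> F \<omega> = \<alpha> * \<kappa> E \<omega>)"
proof -
  obtain h :: "(nat \<Rightarrow> 'a) \<Rightarrow> nat \<Rightarrow> nat \<Rightarrow> nat \<Rightarrow> 'a" where grid: "is_grid h"
    and grid_countable: "countable {h \<omega> n k | \<omega> n k. True}"
    and grid_converges: "\<And>U \<omega>. open U \<Longrightarrow> \<omega> \<in> U \<Longrightarrow> eventually (\<lambda>n. \<forall>k. h \<omega> n k \<in> U) sequentially"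
    using sequence_space_grid[OF D xy] by blast
  obtain U :: "nat filter" where U: "ultrafilter U" "U \<le> sequentially"
    using ultrafilter_exists[OF sequentially_bot] by blast
  show ?thesis
  proof (rule that[of "row_density U h"])
    show "row_density U h A \<omega> \<in> {0..1}" for A \<omega>
      using U(1) by (rule row_density_bounds)
    show "row_density U h (A \<union> B) \<omega> = row_density U h A \<omega> + row_density U h B \<omega>"
      if "A \<inter> B = {}" for A B \<omega>
      using U(1) that by (rule row_density_Un)
    show "row_density U h V \<omega> = 1" if "open V" "\<omega> \<in> V" for V \<omega>
      using U grid_converges[OF that] by (rule row_density_eq_1[where h = h])
    show "\<exists>F\<in>S. F \<subseteq> E \<and> (\<forall>\<omega>. row_density U h F \<omega> = \<alpha> * row_density U h E \<omega>)"
      if \<alpha>: "0 \<le> \<alpha>" "\<alpha> \<le> 1" for E \<alpha>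
    proof -
      obtain F where F: "F \<subseteq> E \<inter> {h \<omega> n k | \<omega> n k. True}"
        and "\<forall>\<omega>. row_density U h F \<omega> = \<alpha> * row_density U h E \<omega>"
        using row_density_thinning[OF U grid \<alpha>] by blast
      moreover have "F \<in> S"
        using countable_subset[OF _ grid_countable] F by (intro countable_in_sigma_algebra[OF sigma opens]) auto
      ultimately show ?thesis by blast
    qed
  qed
qed

theorem theorem14:
  fixes S :: "(nat \<Rightarrow> 'a::metric_space) set set"
    and P :: "(nat \<Rightarrow> 'a) set \<Rightarrow> real"
  assumes separable: "\<exists>D::'a set. countable D \<and> closure D = UNIV"
    and two_points: "\<exists>x y::'a. x \<noteq> y"
    and sigma: "sigma_algebra UNIV S"
    and opens: "\<And>U. open U \<Longrightarrow> U \<in> S"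
    and P: "fa_probability S P"
  shows "\<exists>Q. fa_probability S Q \<and> strongly_nonatomic S Q \<and>
             (\<forall>U. open U \<longrightarrow> P U \<le> Q U)"
proof -
  obtain D :: "'a set" and x y :: 'a where D: "countable D" "closure D = UNIV" and xy: "x \<noteq> y"
    using separable two_points by blast
  obtain \<kappa> :: "(nat \<Rightarrow> 'a) set \<Rightarrow> (nat \<Rightarrow> 'a) \<Rightarrow> real" where bounds: "\<And>A \<omega>. \<kappa> A \<omega> \<in> {0..1}"
    and add: "\<And>A B \<omega>. A \<inter> B = {} \<Longrightarrow> \<kappa> (A \<union> B) \<omega> = \<kappa> A \<omega> + \<kappa> B \<omega>"
    and open_one: "\<And>U \<omega>. open U \<Longrightarrow> \<omega> \<in> U \<Longrightarrow> \<kappa> U \<omega> = 1"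
    and split: "\<And>E \<alpha>. 0 \<le> \<alpha> \<Longrightarrow> \<alpha> \<le> 1 \<Longrightarrow> \<exists>F\<in>S. F \<subseteq> E \<and> (\<forall>\<omega>. \<kappa> F \<omega> = \<alpha> * \<kappa> E \<omega>)"
    using sequence_space_kernel[OF D xy sigma opens] by blast
  show ?thesis
  proof (rule fa_probability_mixture[OF sigma_algebra.axioms(1)[OF sigma] P bounds add])
    show "\<kappa> UNIV \<omega> = 1" for \<omega>
      by (rule open_one) simp_all
    show "\<exists>F\<in>S. F \<subseteq> E \<and> (\<forall>\<omega>. \<kappa> F \<omega> = \<alpha> * \<kappa> E \<omega>)" if "0 \<le> \<alpha>" "\<alpha> \<le> 1" for E \<alpha>
      using that by (rule split)
  next
    fix Q assume Q: "fa_probability S Q" "strongly_nonatomic S Q"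
      and Q_ge: "\<And>A. A \<in> S \<Longrightarrow> (\<And>\<omega>. \<omega> \<in> A \<Longrightarrow> \<kappa> A \<omega> = 1) \<Longrightarrow> P A \<le> Q A"
    have "P U \<le> Q U" if "open U" for U
      using Q_ge[OF opens[OF that]] open_one[OF that] by blast
    with Q show ?thesis by blast
  qed
qed

end
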